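(* Let $q$ be a prime power, $k\ge 3$, $n\ge \frac{k(k+1)}{2}-2$, and let $\alpha_1,\dots,\alpha_n\in\mathbb F_q$ be pairwise distinct. Then there exist $\mathbf i=(i_1,\dots,i_{k-1}),\mathbf j=(j_1,\dots,j_{k-1})\in S_{k-1}(n)$ such that $j_\ell<i_\ell\le \frac{k(k+1)}2-2$ for all $\ell=1,\dots,k-1$ and the $(k-1)\times(k-1)$ matrix over $\mathbb F_q$ whose $(r,s)$ entry is $\alpha_{i_s}^{\,r}-\alpha_{j_s}^{\,r}$ ($1\le r,s\le k-1$) is invertible.
   Context: For $1\le t\le n$, $S_t(n)=\{(i_1,\dots,i_t)\in\{1,\dots,n\}^t:\ 1\le i_1<i_2<\dots<i_t\le n\}$. *)

theory Defs
  imports "Jordan_Normal_Form.Matrix"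
begin

text \<open>S_t(n): strictly increasing t-tuples (i_1,...,i_t) with entries in {1..n};
  a tuple is represented by a function nat => nat, only its values on {1..t} matter.\<close>
definition in_S :: "nat \<Rightarrow> nat \<Rightarrow> (nat \<Rightarrow> nat) \<Rightarrow> bool" where
  "in_S t n i \<longleftrightarrow> (\<forall>l\<in>{1..t}. 1 \<le> i l \<and> i l \<le> n) \<and>
                    (\<forall>l\<in>{1..t}. \<forall>m\<in>{1..t}. l < m \<longrightarrow> i l < i m)"

end

theory Submission
  imports Defs "Jordan_Normal_Form.Determinant"
begin

text \<open>Take consecutive indices \<open>i_l = l + 1\<close>, \<open>j_l = l\<close>. A linear dependence among the rows
  of the resulting matrix yields a polynomial \<open>p\<close> without constant term and of degree at most
  \<open>k - 1\<close> with \<open>p(\<alpha>\<^sub>1) = p(\<alpha>\<^sub>2) = \<dots> = p(\<alpha>\<^sub>k)\<close>; taking \<open>k\<close> equal values at \<open>k\<close> distinct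
  points forces \<open>p\<close> to be constant, hence zero, so the dependence is trivial.\<close>

lemma poly_eq_const_if_equal_values:
  fixes p :: "'a :: idom poly"
  assumes "degree p \<le> m" and "inj_on \<beta> {0..m}" and "\<And>t. t \<le> m \<Longrightarrow> poly p (\<beta> t) = c"
  shows "p = [:c:]"
proof (rule poly_eqI_degree[of "\<beta> ` {0..m}"])
  show "card (\<beta> ` {0..m}) > degree p"
    using assms(1) card_image[OF assms(2)] by simp
  show "card (\<beta> ` {0..m}) > degree [:c:]"
    using card_image[OF assms(2)] by simp
qed (use assms(3) in auto)

lemma sum_power_differences_eq_0_imp_0:
  fixes \<beta> :: "nat \<Rightarrow> 'a :: idom"
  assumes inj: "inj_on \<beta> {0..m}"
    and dep: "\<And>s. s < m \<Longrightarrow> (\<Sum>r<m. v r * (\<beta> (s + 1) ^ (r + 1) - \<beta> s ^ (r + 1))) = 0"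
    and "r < m"
  shows "v r = 0"
proof -
  define p where "p = (\<Sum>r<m. monom (v r) (r + 1))"
  have coeff_p: "coeff p t = (\<Sum>r<m. if r + 1 = t then v r else 0)" for t
    unfolding p_def by (simp add: coeff_sum coeff_monom)
  have "degree p \<le> m"
    by (rule degree_le) (auto simp: coeff_p intro!: sum.neutral)
  have step: "poly p (\<beta> (s + 1)) = poly p (\<beta> s)" if "s < m" for s
  proof -
    have "poly p (\<beta> (s + 1)) - poly p (\<beta> s)
          = (\<Sum>r<m. v r * (\<beta> (s + 1) ^ (r + 1) - \<beta> s ^ (r + 1)))"
      by (simp add: p_def poly_sum poly_monom sum_subtractf right_diff_distrib)
    with dep[OF that] show ?thesis by simp
  qed
  have "poly p (\<beta> t) = poly p (\<beta> 0)" if "t \<le> m" for t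
    using that
  proof (induction t)
    case (Suc t)
    then show ?case using step[of t] by simp
  qed simp
  then have "p = [:poly p (\<beta> 0):]"
    using poly_eq_const_if_equal_values[OF \<open>degree p \<le> m\<close> inj] by blast
  then have "coeff p (r + 1) = 0" by (metis coeff_pCons_Suc coeff_0 add.commute plus_1_eq_Suc)
  with \<open>r < m\<close> show ?thesis by (simp add: coeff_p if_distrib cong: if_cong)
qed

lemma det_power_differences_nonzero:
  fixes \<beta> :: "nat \<Rightarrow> 'a :: field"
  assumes inj: "inj_on \<beta> {0..m}"
  shows "det (mat m m (\<lambda>(r, s). \<beta> (s + 1) ^ (r + 1) - \<beta> s ^ (r + 1))) \<noteq> 0"
    (is "det ?A \<noteq> 0")
proof
  assume "det ?A = 0"
  then have "det (transpose_mat ?A) = 0"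
    using det_transpose[of ?A m] by simp
  then obtain v where v: "v \<in> carrier_vec m" "v \<noteq> 0\<^sub>v m" "transpose_mat ?A *\<^sub>v v = 0\<^sub>v m"
    using det_0_iff_vec_prod_zero_field[of "transpose_mat ?A" m] by auto
  have "(\<Sum>r<m. v $ r * (\<beta> (s + 1) ^ (r + 1) - \<beta> s ^ (r + 1))) = 0" if "s < m" for s
  proof -
    have "(transpose_mat ?A *\<^sub>v v) $ s = 0" using v(3) that by simp
    then show ?thesis
      using that v(1)
      by (simp add: scalar_prod_def lessThan_atLeast0 row_def mult.commute)
  qed
  then have "v $ r = 0" if "r < m" for r
    using sum_power_differences_eq_0_imp_0[OF inj _ that, of "\<lambda>r. v $ r"] by blast
  then have "v = 0\<^sub>v m" using v(1) by (intro eq_vecI) auto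
  with v(2) show False by simp
qed

lemma invertible_mat_if_det_nonzero:
  fixes A :: "'a :: field mat"
  assumes A: "A \<in> carrier_mat n n" and "det A \<noteq> 0"
  shows "invertible_mat A"
proof -
  obtain B where "B \<in> carrier_mat n n" "A * B = 1\<^sub>m n" "B * A = 1\<^sub>m n"
    using det_non_zero_imp_unit[OF assms, of "()"] by (auto simp: Units_def ring_mat_def)
  with A show ?thesis
    unfolding invertible_mat_def inverts_mat_def by auto
qed

lemma k_le_triangular_minus_2:
  assumes "k \<ge> (3 :: nat)"
  shows "k \<le> k * (k + 1) div 2 - 2"
proof -
  have "2 * k + 4 \<le> 3 * (k + 1)" using assms by simp
  also have "\<dots> \<le> k * (k + 1)" using assms by (rule mult_le_mono1)
  finally show ?thesis by linarith
qed

theorem lemma3p8: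
  fixes \<alpha> :: "nat \<Rightarrow> 'a :: {finite, field}" and k n :: nat
  assumes "k \<ge> 3"
    and "n \<ge> k * (k + 1) div 2 - 2"
    and "inj_on \<alpha> {1..n}"
  shows "\<exists>i j. in_S (k - 1) n i \<and> in_S (k - 1) n j \<and>
           (\<forall>l\<in>{1..k-1}. j l < i l \<and> i l \<le> k * (k + 1) div 2 - 2) \<and>
           invertible_mat (mat (k - 1) (k - 1)
              (\<lambda>(r, s). \<alpha> (i (s + 1)) ^ (r + 1) - \<alpha> (j (s + 1)) ^ (r + 1)))"
proof (intro exI conjI)
  have k: "k \<le> k * (k + 1) div 2 - 2" using assms(1) by (rule k_le_triangular_minus_2)
  show "in_S (k - 1) n (\<lambda>l. l + 1)" "in_S (k - 1) n (\<lambda>l. l)"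
    using assms(2) k by (auto simp: in_S_def)
  show "\<forall>l\<in>{1..k-1}. l < l + 1 \<and> l + 1 \<le> k * (k + 1) div 2 - 2"
    using k by auto
  have "inj_on (\<lambda>t. \<alpha> (t + 1)) {0..k - 1}"
    using assms(2) k by (auto intro!: inj_onI dest: inj_onD[OF assms(3)])
  then show "invertible_mat (mat (k - 1) (k - 1)
              (\<lambda>(r, s). \<alpha> (s + 1 + 1) ^ (r + 1) - \<alpha> (s + 1) ^ (r + 1)))"
    by (intro invertible_mat_if_det_nonzero det_power_differences_nonzero) auto
qed

end
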